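(* Consider the $N$-node uplink system described in the context with weights $\omega_i>0$, arrival rates $\lambda_i\in(0,1]$ and success probabilities $p_i\in(0,1]$, and let $\lambda_{\min}=\min_i\lambda_i$. Let $(q^*_1,\dots,q^*_N)$ be an optimal solution of $$\min_{q_1,\dots,q_N>0}\ \frac{1}{2N}\sum_{i=1}^N\omega_i\left(\frac1{q_i}+3\right)\quad\text{s.t.}\quad\sum_{i=1}^N\frac{q_i}{p_i}\le1,\quad q_i\le\lambda_i\ \ \forall i,$$ and let $L_B=\frac{1}{2N}\sum_{i=1}^N\omega_i\left(\frac1{q^*_i}+3\right)$ be its optimal value. Let $R^{POMW}$ be the long-term expected weighted sum AoI of the POMW policy with parameters $\beta_i=\omega_i/(\lambda_iq^*_i)$. Then $$\frac{R^{POMW}}{L_B}<\frac{2}{\lambda_{\min}}.$$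
   Context: System: $N$ nodes $i=1,\dots,N$ and one access point (AP); time slots $t=0,1,2,\dots$. Node $i$ receives a status update in each slot independently with probability $\lambda_i$ (independent across nodes and slots) and keeps only the latest one. Local age: $d_{t+1,i}=1$ if an update arrives at node $i$ in slot $t$, else $d_{t+1,i}=d_{t,i}+1$. In each slot the AP schedules at most one node; a scheduled node $i$'s transmission succeeds with probability $p_i$ independently. If node $i$ is scheduled and succeeds in slot $t$, the AP observes $d_{t,i}$ and $D_{t+1,i}=d_{t,i}+1$; otherwise the AP observes nothing about $d_{t,i}$ and $D_{t+1,i}=D_{t,i}+1$. Initialization: $d_{0,i}=D_{0,i}=1$ for all $i$. Belief: $b_{t,i}(d)=\Pr(d_{t,i}=d\mid\text{AP history up to slot }t-1)$. POMW policy with parameters $\beta_i>0$: in each slot $t$ the AP computes $G_{t,i}=D_{t,i}-\sum_{d\ge1}b_{t,i}(d)\,d$ for every $i$ and schedules a node $j\in\arg\max_i\beta_ip_iG_{t,i}$. The long-term expected weighted sum AoI of a policy $\pi$ is $\lim_{T\to\infty}\frac{1}{NT}\mathbb{E}\left[\sum_{t=1}^T\sum_{i=1}^N\omega_iD_{t,i}\,\middle|\,\pi\right]$. *)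

theory Defs
  imports "HOL-Probability.Probability"
begin

(* Nodes are indexed 0..N-1 (paper: 1..N). Slots t = 0,1,2,...

   Randomness: an outcome is a pair (arrivals, successes) of boolean
   fields indexed by (slot, node):
     fst om (t,i) = an update arrives at node i in slot t  (prob lam i)
     snd om (t,i) = a transmission of node i in slot t would succeed (prob p i)
   all mutually independent.  Only the success bit of the scheduled node is
   ever used, so this is the model of the paper. *)

type_synonym outcome = "(nat \<times> nat \<Rightarrow> bool) \<times> (nat \<times> nat \<Rightarrow> bool)"

(* one AP observation in a slot: (scheduled node, Some d_{t,i} on success / None on failure) *)
type_synonym obs = "nat \<times> nat option"

(* a (deterministic, history dependent) scheduling policy of the AP *)
type_synonym policy = "nat \<Rightarrow> obs list \<Rightarrow> nat"

definition sys_pmf :: "nat \<Rightarrow> (nat \<Rightarrow> real) \<Rightarrow> (nat \<Rightarrow> real) \<Rightarrow> nat \<Rightarrow> outcome pmf" where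
  "sys_pmf N lam p T =
     pair_pmf (Pi_pmf ({..<T} \<times> {..<N}) False (\<lambda>(t,i). bernoulli_pmf (lam i)))
              (Pi_pmf ({..<T} \<times> {..<N}) False (\<lambda>(t,i). bernoulli_pmf (p i)))"

definition arrival :: "outcome \<Rightarrow> nat \<Rightarrow> nat \<Rightarrow> bool" where
  "arrival om t i = fst om (t, i)"

definition success :: "outcome \<Rightarrow> nat \<Rightarrow> nat \<Rightarrow> bool" where
  "success om t i = snd om (t, i)"

primrec local_age :: "outcome \<Rightarrow> nat \<Rightarrow> nat \<Rightarrow> nat" where
  "local_age om i 0 = 1"
| "local_age om i (Suc t) = (if arrival om t i then 1 else local_age om i t + 1)"

(* AP history up to slot t-1 (observations of slots 0..t-1) under policy pol *)
primrec hist :: "policy \<Rightarrow> outcome \<Rightarrow> nat \<Rightarrow> obs list" where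
  "hist pol om 0 = []"
| "hist pol om (Suc t) =
     (let u = pol t (hist pol om t)
      in hist pol om t @ [(u, if success om t u then Some (local_age om u t) else None)])"

primrec ap_age :: "policy \<Rightarrow> outcome \<Rightarrow> nat \<Rightarrow> nat \<Rightarrow> nat" where
  "ap_age pol om i 0 = 1"
| "ap_age pol om i (Suc t) =
     (let u = pol t (hist pol om t)
      in if u = i \<and> success om t i then local_age om i t + 1 else ap_age pol om i t + 1)"

definition belief :: "nat \<Rightarrow> (nat \<Rightarrow> real) \<Rightarrow> (nat \<Rightarrow> real) \<Rightarrow> policy
                      \<Rightarrow> nat \<Rightarrow> nat \<Rightarrow> obs list \<Rightarrow> nat \<Rightarrow> real" where
  "belief N lam p pol t i h d =
     measure_pmf.prob (sys_pmf N lam p t) {om. local_age om i t = d \<and> hist pol om t = h}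
     / measure_pmf.prob (sys_pmf N lam p t) {om. hist pol om t = h}"

(* G_{t,i} = D_{t,i} - sum_{d>=1} b_{t,i}(d) d   (the d = 0 term is 0) *)
definition gain :: "nat \<Rightarrow> (nat \<Rightarrow> real) \<Rightarrow> (nat \<Rightarrow> real) \<Rightarrow> policy
                    \<Rightarrow> outcome \<Rightarrow> nat \<Rightarrow> nat \<Rightarrow> real" where
  "gain N lam p pol om t i =
     real (ap_age pol om i t) - (\<Sum>d. belief N lam p pol t i (hist pol om t) d * real d)"

definition is_POMW :: "nat \<Rightarrow> (nat \<Rightarrow> real) \<Rightarrow> (nat \<Rightarrow> real) \<Rightarrow> (nat \<Rightarrow> real) \<Rightarrow> policy \<Rightarrow> bool" where
  "is_POMW N lam p beta pol \<longleftrightarrow>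
     (\<forall>t om. om \<in> set_pmf (sys_pmf N lam p t) \<longrightarrow>
        (let j = pol t (hist pol om t) in
           j < N \<and>
           (\<forall>i<N. beta i * p i * gain N lam p pol om t i \<le> beta j * p j * gain N lam p pol om t j)))"

definition avg_wAoI :: "nat \<Rightarrow> (nat \<Rightarrow> real) \<Rightarrow> (nat \<Rightarrow> real) \<Rightarrow> (nat \<Rightarrow> real) \<Rightarrow> policy \<Rightarrow> nat \<Rightarrow> real" where
  "avg_wAoI N w lam p pol T =
     measure_pmf.expectation (sys_pmf N lam p T)
       (\<lambda>om. \<Sum>t=1..T. \<Sum>i<N. w i * real (ap_age pol om i t)) / (real N * real T)"

(* long-term expected weighted sum AoI, taken as a limsup (equals the lim when it exists) *)
definition longterm_wAoI :: "nat \<Rightarrow> (nat \<Rightarrow> real) \<Rightarrow> (nat \<Rightarrow> real) \<Rightarrow> (nat \<Rightarrow> real) \<Rightarrow> policy \<Rightarrow> ereal" where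
  "longterm_wAoI N w lam p pol = limsup (\<lambda>T. ereal (avg_wAoI N w lam p pol T))"

definition lb_feasible :: "nat \<Rightarrow> (nat \<Rightarrow> real) \<Rightarrow> (nat \<Rightarrow> real) \<Rightarrow> (nat \<Rightarrow> real) \<Rightarrow> bool" where
  "lb_feasible N lam p q \<longleftrightarrow>
     (\<forall>i<N. 0 < q i \<and> q i \<le> lam i) \<and> (\<Sum>i<N. q i / p i) \<le> 1"

definition lb_objective :: "nat \<Rightarrow> (nat \<Rightarrow> real) \<Rightarrow> (nat \<Rightarrow> real) \<Rightarrow> real" where
  "lb_objective N w q = (\<Sum>i<N. w i * (1 / q i + 3)) / (2 * real N)"

definition lb_optimal :: "nat \<Rightarrow> (nat \<Rightarrow> real) \<Rightarrow> (nat \<Rightarrow> real) \<Rightarrow> (nat \<Rightarrow> real) \<Rightarrow> (nat \<Rightarrow> real) \<Rightarrow> bool" where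
  "lb_optimal N w lam p q \<longleftrightarrow>
     lb_feasible N lam p q \<and> (\<forall>q'. lb_feasible N lam p q' \<longrightarrow> lb_objective N w q \<le> lb_objective N w q')"

end

theory Submission
  imports Defs
begin

(* A Lyapunov drift argument on expected ages. Write d_i(t) and D_i(t) for the expected local
   and AP ages of node i. Since the arrival and success bits of slot t are independent of
   everything that happened before,
     d_i(t+1) = (1 - lam_i) d_i(t) + 1, hence d_i(t) <= 1/lam_i, and
     D_i(t+1) = D_i(t) + 1 - p_i E[1{i scheduled in slot t} G_i(t)],
   while the tower property of the belief gives E[G_i(t)] = D_i(t) - d_i(t). As
   sum_i q_i/p_i <= 1, the index beta_i p_i G_i maximised by POMW dominates the sub-convex
   combination sum_i (q_i/p_i) beta_i p_i G_i = sum_i (w_i/lam_i) G_i. For the potential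
   Phi(t) = sum_i beta_i (D_i(t) - d_i(t)) this yields
     Phi(t+1) - Phi(t) <= sum_i w_i/(q_i lam_i) - sum_i (w_i/lam_i) (D_i(t) - d_i(t)),
   and telescoping from Phi(0) = 0 bounds the time-averaged weighted AoI by
   (1/N) sum_i w_i (1/q_i + 1)/lam_i < (2/lam_min) L_B. *)

section \<open>Expectations over finite probability mass functions\<close>

lemma expectation_pair_pmf_iterated:
  fixes F :: "'a \<times> 'b \<Rightarrow> real"
  assumes "finite (set_pmf A)" "finite (set_pmf B)"
  shows "measure_pmf.expectation (pair_pmf A B) F
       = measure_pmf.expectation A (\<lambda>a. measure_pmf.expectation B (\<lambda>b. F (a, b)))"
proof -
  have "measure_pmf.expectation (pair_pmf A B) F
      = (\<Sum>z\<in>set_pmf A \<times> set_pmf B. F z * pmf (pair_pmf A B) z)"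
    using assms by (intro integral_measure_pmf_real) auto
  also have "\<dots> = (\<Sum>a\<in>set_pmf A. \<Sum>b\<in>set_pmf B. F (a, b) * (pmf A a * pmf B b))"
    by (auto simp: sum.cartesian_product case_prod_beta pmf_pair intro!: sum.cong)
  finally show ?thesis
    using assms by (simp add: integral_measure_pmf_real sum_distrib_left sum_distrib_right mult_ac)
qed

lemma expectation_pair_pmf_iterated':
  fixes F :: "'a \<times> 'b \<Rightarrow> real"
  assumes "finite (set_pmf A)" "finite (set_pmf B)"
  shows "measure_pmf.expectation (pair_pmf A B) F
       = measure_pmf.expectation B (\<lambda>b. measure_pmf.expectation A (\<lambda>a. F (a, b)))"
proof -
  have "measure_pmf.expectation (pair_pmf A B) F
      = measure_pmf.expectation (pair_pmf B A) (\<lambda>(b, a). F (a, b))"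
    by (subst pair_commute_pmf) (simp add: case_prod_beta)
  then show ?thesis
    using assms by (simp add: expectation_pair_pmf_iterated)
qed

lemma finite_set_Pi_pmf:
  fixes P :: "'a \<Rightarrow> 'b::finite pmf"
  shows "finite A \<Longrightarrow> finite (set_pmf (Pi_pmf A dflt P))"
  by (rule finite_subset[OF set_Pi_pmf_subset']) auto

lemma expectation_Pi_pmf_component_mult:
  fixes P :: "'a \<Rightarrow> 'b::finite pmf" and f :: "'b \<Rightarrow> real" and g :: "('a \<Rightarrow> 'b) \<Rightarrow> real"
  assumes "finite A" "x \<in> A" "\<And>h y. g (h(x := y)) = g h"
  shows "measure_pmf.expectation (Pi_pmf A dflt P) (\<lambda>h. f (h x) * g h)
       = measure_pmf.expectation (P x) f * measure_pmf.expectation (Pi_pmf A dflt P) g"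
proof -
  let ?R = "Pi_pmf (A - {x}) dflt P"
  have decomp: "Pi_pmf A dflt P = map_pmf (\<lambda>(y, h). h(x := y)) (pair_pmf (P x) ?R)"
    using Pi_pmf_insert[of "A - {x}" x dflt P] assms(1,2) by (simp add: insert_absorb)
  have fin: "finite (set_pmf (P x))" "finite (set_pmf ?R)"
    using assms(1) by (auto intro: finite_set_Pi_pmf)
  have "measure_pmf.expectation (Pi_pmf A dflt P) (\<lambda>h. f (h x) * g h)
      = measure_pmf.expectation (pair_pmf (P x) ?R) (\<lambda>z. f (fst z) * g (snd z))"
    by (simp add: decomp case_prod_beta assms(3))
  also have "\<dots> = measure_pmf.expectation (P x) f * measure_pmf.expectation ?R g"
    using fin by (simp add: expectation_pair_pmf_iterated)
  also have "measure_pmf.expectation ?R g = measure_pmf.expectation (Pi_pmf A dflt P) g"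
    by (simp add: decomp case_prod_beta assms(3))
  finally show ?thesis .
qed

(* E[Y | X = h], in the form in which the belief enters the definition of gain;
   it is 0 when X = h has probability 0. *)
definition cond_mean :: "'a pmf \<Rightarrow> ('a \<Rightarrow> 'h) \<Rightarrow> ('a \<Rightarrow> nat) \<Rightarrow> 'h \<Rightarrow> real" where
  "cond_mean M X Y h =
     (\<Sum>d. measure_pmf.prob M {x. Y x = d \<and> X x = h} / measure_pmf.prob M {x. X x = h} * real d)"

lemma prob_eq_sum_set_pmf:
  "finite (set_pmf M) \<Longrightarrow> measure_pmf.prob M A = (\<Sum>x\<in>{x\<in>set_pmf M. x \<in> A}. pmf M x)"
  by (metis Collect_mem_eq Int_def finite_Int measure_Int_set_pmf measure_measure_pmf_finite Int_commute)

lemma cond_mean_mult_prob: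
  assumes fin: "finite (set_pmf M)"
  shows "cond_mean M X Y h * measure_pmf.prob M {x. X x = h}
       = (\<Sum>x\<in>{x\<in>set_pmf M. X x = h}. pmf M x * real (Y x))"
proof -
  let ?S = "{x\<in>set_pmf M. X x = h}"
  let ?P = "measure_pmf.prob M {x. X x = h}"
  have finS: "finite ?S"
    using fin by simp
  have prob_d: "measure_pmf.prob M {x. Y x = d \<and> X x = h} = (\<Sum>x\<in>{x\<in>?S. Y x = d}. pmf M x)" for d
    using fin by (subst prob_eq_sum_set_pmf) (auto intro: sum.cong)
  have vanish: "measure_pmf.prob M {x. Y x = d \<and> X x = h} = 0" if "d \<notin> Y ` ?S" for d
    unfolding prob_d using that by (auto intro!: sum.neutral)
  have "cond_mean M X Y h = (\<Sum>d\<in>Y ` ?S. measure_pmf.prob M {x. Y x = d \<and> X x = h} / ?P * real d)"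
    unfolding cond_mean_def using finS by (intro suminf_finite) (auto simp: vanish)
  then have "cond_mean M X Y h * ?P = (\<Sum>d\<in>Y ` ?S. \<Sum>x\<in>{x\<in>?S. Y x = d}. pmf M x * real (Y x))"
  proof (cases "?P = 0")
    case True
    then have "?S = {}"
      using measure_pmf_posI[of _ M "{x. X x = h}"] by auto
    with True show ?thesis
      by (simp only: mult_zero_right image_empty sum.empty)
  next
    case False
    with \<open>cond_mean M X Y h = _\<close>
    have "cond_mean M X Y h * ?P = (\<Sum>d\<in>Y ` ?S. measure_pmf.prob M {x. Y x = d \<and> X x = h} * real d)"
      by (simp add: sum_distrib_right)
    then show ?thesis
      by (simp add: prob_d sum_distrib_right)
  qed
  also have "\<dots> = (\<Sum>x\<in>?S. pmf M x * real (Y x))"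
    using finS by (intro sum.group) auto
  finally show ?thesis .
qed

lemma cond_mean_le:
  assumes fin: "finite (set_pmf M)" and x: "x \<in> set_pmf M"
    and le: "\<And>x'. x' \<in> set_pmf M \<Longrightarrow> X x' = X x \<Longrightarrow> real (Y x') \<le> c"
  shows "cond_mean M X Y (X x) \<le> c"
proof -
  let ?S = "{x'\<in>set_pmf M. X x' = X x}"
  let ?P = "measure_pmf.prob M {x'. X x' = X x}"
  have "cond_mean M X Y (X x) * ?P = (\<Sum>x'\<in>?S. pmf M x' * real (Y x'))"
    using fin by (rule cond_mean_mult_prob)
  also have "\<dots> \<le> (\<Sum>x'\<in>?S. pmf M x' * c)"
    using le by (intro sum_mono mult_left_mono) auto
  also have "\<dots> = c * ?P"
    using fin by (simp add: prob_eq_sum_set_pmf sum_distrib_left mult.commute)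
  finally show ?thesis
    using measure_pmf_posI[OF x, of "{x'. X x' = X x}"] by simp
qed

lemma expectation_mult_cond_mean:
  fixes f :: "'h \<Rightarrow> real"
  assumes fin: "finite (set_pmf M)"
  shows "measure_pmf.expectation M (\<lambda>x. f (X x) * cond_mean M X Y (X x))
       = measure_pmf.expectation M (\<lambda>x. f (X x) * real (Y x))"
proof -
  let ?S = "\<lambda>h. {x\<in>set_pmf M. X x = h}"
  have fiber: "(\<Sum>x\<in>?S h. f (X x) * cond_mean M X Y (X x) * pmf M x)
             = (\<Sum>x\<in>?S h. f (X x) * real (Y x) * pmf M x)" for h
  proof -
    have "(\<Sum>x\<in>?S h. f (X x) * cond_mean M X Y (X x) * pmf M x)
        = f h * (cond_mean M X Y h * measure_pmf.prob M {x. X x = h})"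
      using fin by (simp add: prob_eq_sum_set_pmf sum_distrib_left mult_ac)
    also have "\<dots> = (\<Sum>x\<in>?S h. f (X x) * real (Y x) * pmf M x)"
      using fin by (simp add: cond_mean_mult_prob sum_distrib_left mult_ac)
    finally show ?thesis .
  qed
  have "measure_pmf.expectation M (\<lambda>x. f (X x) * cond_mean M X Y (X x))
      = (\<Sum>x\<in>set_pmf M. f (X x) * cond_mean M X Y (X x) * pmf M x)"
    using fin by (simp add: integral_measure_pmf_real)
  also have "\<dots> = (\<Sum>h\<in>X ` set_pmf M. \<Sum>x\<in>?S h. f (X x) * cond_mean M X Y (X x) * pmf M x)"
    using fin by (intro sum.group[symmetric]) auto
  also have "\<dots> = (\<Sum>h\<in>X ` set_pmf M. \<Sum>x\<in>?S h. f (X x) * real (Y x) * pmf M x)"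
    by (simp only: fiber)
  also have "\<dots> = (\<Sum>x\<in>set_pmf M. f (X x) * real (Y x) * pmf M x)"
    using fin by (intro sum.group) auto
  also have "\<dots> = measure_pmf.expectation M (\<lambda>x. f (X x) * real (Y x))"
    using fin by (simp add: integral_measure_pmf_real)
  finally show ?thesis .
qed

section \<open>The uplink model\<close>

lemma finite_set_sys_pmf: "finite (set_pmf (sys_pmf N lam p T))"
  by (simp add: sys_pmf_def finite_set_Pi_pmf)

lemma integrable_sys_pmf [simp]: "integrable (sys_pmf N lam p T) (f :: outcome \<Rightarrow> real)"
  by (rule integrable_measure_pmf_finite[OF finite_set_sys_pmf])

definition ap_age_of_obs :: "nat \<Rightarrow> obs list \<Rightarrow> nat" where
  "ap_age_of_obs i = foldl (\<lambda>D (u, r). if u = i \<and> r \<noteq> None then the r + 1 else D + 1) 1"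

lemma ap_age_eq_of_obs: "ap_age pol om i t = ap_age_of_obs i (hist pol om t)"
  by (induction t) (auto simp: ap_age_of_obs_def Let_def)

definition same_past :: "nat \<Rightarrow> outcome \<Rightarrow> outcome \<Rightarrow> bool" where
  "same_past t om om' \<longleftrightarrow> (\<forall>s<t. \<forall>i. fst om (s, i) = fst om' (s, i) \<and> snd om (s, i) = snd om' (s, i))"

lemma same_past_Suc: "same_past (Suc t) om om' \<Longrightarrow> same_past t om om'"
  unfolding same_past_def by auto

lemma local_age_same_past: "same_past t om om' \<Longrightarrow> local_age om i t = local_age om' i t"
  by (induction t) (auto simp: arrival_def same_past_def)

lemma hist_same_past: "same_past t om om' \<Longrightarrow> hist pol om t = hist pol om' t"
proof (induction t)
  case (Suc t)
  then show ?case
    using local_age_same_past[OF same_past_Suc[OF Suc.prems]]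
    by (auto simp: Let_def success_def same_past_def dest: same_past_Suc)
qed simp

lemma ap_age_same_past: "same_past t om om' \<Longrightarrow> ap_age pol om i t = ap_age pol om' i t"
  by (simp add: ap_age_eq_of_obs hist_same_past)

lemma same_past_upd_arrival [simp]: "same_past t (a((t, i) := b), c) (a, c)"
  unfolding same_past_def by simp

lemma same_past_upd_success [simp]: "same_past t (a, c((t, i) := b)) (a, c)"
  unfolding same_past_def by simp

definition restrict_slots :: "nat \<Rightarrow> nat \<Rightarrow> (nat \<times> nat \<Rightarrow> bool) \<Rightarrow> nat \<times> nat \<Rightarrow> bool" where
  "restrict_slots N t f = (\<lambda>x. if x \<in> {..<t} \<times> {..<N} then f x else False)"

lemma sys_pmf_restrict:
  assumes "t \<le> T"
  shows "sys_pmf N lam p t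
       = map_pmf (map_prod (restrict_slots N t) (restrict_slots N t)) (sys_pmf N lam p T)"
proof -
  have "{..<t} \<times> {..<N} \<subseteq> {..<T} \<times> {..<N}"
    using assms by auto
  then show ?thesis
    unfolding sys_pmf_def map_prod_def map_pair restrict_slots_def
    by (subst (1 2) Pi_pmf_subset) auto
qed

lemma expectation_sys_pmf_horizon:
  fixes F :: "outcome \<Rightarrow> real"
  assumes "t \<le> T" and F: "\<And>om om'. same_past t om om' \<Longrightarrow> F om = F om'"
  shows "measure_pmf.expectation (sys_pmf N lam p t) F = measure_pmf.expectation (sys_pmf N lam p T) F"
proof -
  let ?r = "map_prod (restrict_slots N t) (restrict_slots N t)"
  \<comment> \<open>on the support the bits of nodes outside \<open>{..<N}\<close> are already \<open>False\<close>\<close>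
  have past: "same_past t om (?r om)" if "om \<in> set_pmf (sys_pmf N lam p T)" for om
  proof -
    have "\<not> fst om (s, i) \<and> \<not> snd om (s, i)" if "\<not> i < N" for s i
      using \<open>om \<in> _\<close> that set_Pi_pmf_subset[of "{..<T} \<times> {..<N}"]
      unfolding sys_pmf_def by (cases om) fastforce
    then show ?thesis
      unfolding same_past_def restrict_slots_def by (cases om) auto
  qed
  then have "measure_pmf.expectation (sys_pmf N lam p T) (\<lambda>om. F (?r om))
           = measure_pmf.expectation (sys_pmf N lam p T) F"
    by (intro integral_cong_AE AE_pmfI) (simp_all add: F[OF past, symmetric])
  then show ?thesis
    by (simp add: sys_pmf_restrict[OF assms(1)])
qed

lemma expectation_arrival_mult:
  fixes g :: "outcome \<Rightarrow> real"
  assumes "t < T" "i < N" "0 \<le> lam i" "lam i \<le> 1"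
    and g: "\<And>a c b. g (a((t, i) := b), c) = g (a, c)"
  shows "measure_pmf.expectation (sys_pmf N lam p T) (\<lambda>om. of_bool (arrival om t i) * g om)
       = lam i * measure_pmf.expectation (sys_pmf N lam p T) g"
proof -
  let ?A = "Pi_pmf ({..<T} \<times> {..<N}) False (\<lambda>(t, i). bernoulli_pmf (lam i))"
  let ?B = "Pi_pmf ({..<T} \<times> {..<N}) False (\<lambda>(t, i). bernoulli_pmf (p i))"
  have fin: "finite (set_pmf ?A)" "finite (set_pmf ?B)"
    by (simp_all add: finite_set_Pi_pmf)
  have "measure_pmf.expectation (sys_pmf N lam p T) (\<lambda>om. of_bool (arrival om t i) * g om)
      = measure_pmf.expectation ?A (\<lambda>a. of_bool (a (t, i)) * measure_pmf.expectation ?B (\<lambda>c. g (a, c)))"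
    using fin by (simp add: sys_pmf_def expectation_pair_pmf_iterated arrival_def)
  also have "\<dots> = lam i * measure_pmf.expectation ?A (\<lambda>a. measure_pmf.expectation ?B (\<lambda>c. g (a, c)))"
    using assms by (subst expectation_Pi_pmf_component_mult) (auto simp: g)
  also have "\<dots> = lam i * measure_pmf.expectation (sys_pmf N lam p T) g"
    using fin by (simp add: sys_pmf_def expectation_pair_pmf_iterated)
  finally show ?thesis .
qed

lemma expectation_success_mult:
  fixes g :: "outcome \<Rightarrow> real"
  assumes "t < T" "i < N" "0 \<le> p i" "p i \<le> 1"
    and g: "\<And>a c b. g (a, c((t, i) := b)) = g (a, c)"
  shows "measure_pmf.expectation (sys_pmf N lam p T) (\<lambda>om. of_bool (success om t i) * g om)
       = p i * measure_pmf.expectation (sys_pmf N lam p T) g"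
proof -
  let ?A = "Pi_pmf ({..<T} \<times> {..<N}) False (\<lambda>(t, i). bernoulli_pmf (lam i))"
  let ?B = "Pi_pmf ({..<T} \<times> {..<N}) False (\<lambda>(t, i). bernoulli_pmf (p i))"
  have fin: "finite (set_pmf ?A)" "finite (set_pmf ?B)"
    by (simp_all add: finite_set_Pi_pmf)
  have "measure_pmf.expectation (sys_pmf N lam p T) (\<lambda>om. of_bool (success om t i) * g om)
      = measure_pmf.expectation ?B (\<lambda>c. of_bool (c (t, i)) * measure_pmf.expectation ?A (\<lambda>a. g (a, c)))"
    using fin by (simp add: sys_pmf_def expectation_pair_pmf_iterated' success_def)
  also have "\<dots> = p i * measure_pmf.expectation ?B (\<lambda>c. measure_pmf.expectation ?A (\<lambda>a. g (a, c)))"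
    using assms by (subst expectation_Pi_pmf_component_mult) (auto simp: g)
  also have "\<dots> = p i * measure_pmf.expectation (sys_pmf N lam p T) g"
    using fin by (simp add: sys_pmf_def expectation_pair_pmf_iterated')
  finally show ?thesis .
qed

lemma gain_eq_cond_mean:
  "gain N lam p pol om t i = real (ap_age pol om i t)
     - cond_mean (sys_pmf N lam p t) (\<lambda>om. hist pol om t) (\<lambda>om. local_age om i t) (hist pol om t)"
  unfolding gain_def belief_def cond_mean_def ..

lemma local_age_le_ap_age: "local_age om i t \<le> ap_age pol om i t"
  by (induction t) (auto simp: Let_def)

lemma gain_nonneg:
  assumes "om \<in> set_pmf (sys_pmf N lam p t)"
  shows "0 \<le> gain N lam p pol om t i"
proof -
  have "cond_mean (sys_pmf N lam p t) (\<lambda>om. hist pol om t) (\<lambda>om. local_age om i t) (hist pol om t)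
      \<le> real (ap_age pol om i t)"
    using finite_set_sys_pmf assms
  proof (rule cond_mean_le)
    fix om' assume "hist pol om' t = hist pol om t"
    then show "real (local_age om' i t) \<le> real (ap_age pol om i t)"
      by (metis ap_age_eq_of_obs local_age_le_ap_age of_nat_mono)
  qed
  then show ?thesis
    by (simp add: gain_eq_cond_mean)
qed

lemma expectation_mult_gain:
  fixes f :: "obs list \<Rightarrow> real"
  shows "measure_pmf.expectation (sys_pmf N lam p t) (\<lambda>om. f (hist pol om t) * gain N lam p pol om t i)
       = measure_pmf.expectation (sys_pmf N lam p t)
           (\<lambda>om. f (hist pol om t) * (real (ap_age pol om i t) - real (local_age om i t)))"
  using expectation_mult_cond_mean[OF finite_set_sys_pmf,
      where X = "\<lambda>om. hist pol om t" and Y = "\<lambda>om. local_age om i t" and f = f]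
  by (simp add: gain_eq_cond_mean right_diff_distrib)

section \<open>Drift analysis of POMW\<close>

locale uplink_system =
  fixes N :: nat and lam p :: "nat \<Rightarrow> real" and pol :: policy
  assumes arrival_rate: "i < N \<Longrightarrow> 0 < lam i \<and> lam i \<le> 1"
    and success_prob: "i < N \<Longrightarrow> 0 < p i \<and> p i \<le> 1"
begin

abbreviation expect :: "nat \<Rightarrow> (outcome \<Rightarrow> real) \<Rightarrow> real" where
  "expect T F \<equiv> measure_pmf.expectation (sys_pmf N lam p T) F"

definition mean_local_age :: "nat \<Rightarrow> nat \<Rightarrow> real" where
  "mean_local_age i t = expect t (\<lambda>om. real (local_age om i t))"

definition mean_ap_age :: "nat \<Rightarrow> nat \<Rightarrow> real" where
  "mean_ap_age i t = expect t (\<lambda>om. real (ap_age pol om i t))"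

definition mean_served_gain :: "nat \<Rightarrow> nat \<Rightarrow> real" where
  "mean_served_gain i t = expect t (\<lambda>om. of_bool (pol t (hist pol om t) = i) * gain N lam p pol om t i)"

lemma mean_local_age_Suc:
  assumes "i < N"
  shows "mean_local_age i (Suc t) = (1 - lam i) * mean_local_age i t + 1"
proof -
  have "mean_local_age i (Suc t) = expect (Suc t)
          (\<lambda>om. real (local_age om i t) + 1 - of_bool (arrival om t i) * real (local_age om i t))"
    unfolding mean_local_age_def by (intro Bochner_Integration.integral_cong) auto
  also have "\<dots> = expect (Suc t) (\<lambda>om. real (local_age om i t))
                  + 1 - lam i * expect (Suc t) (\<lambda>om. real (local_age om i t))"
    using assms arrival_rate[OF assms]
    by (simp add: expectation_arrival_mult[where T = "Suc t"] local_age_same_past[OF same_past_upd_arrival])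
  also have "expect (Suc t) (\<lambda>om. real (local_age om i t)) = mean_local_age i t"
    unfolding mean_local_age_def
    by (rule expectation_sys_pmf_horizon[symmetric]) (auto dest: local_age_same_past)
  finally show ?thesis
    by (simp add: algebra_simps)
qed

lemma mean_local_age_le:
  assumes "i < N"
  shows "mean_local_age i t \<le> 1 / lam i"
proof (induction t)
  case 0
  then show ?case
    using arrival_rate[OF assms] by (simp add: mean_local_age_def)
next
  case (Suc t)
  have "mean_local_age i (Suc t) \<le> (1 - lam i) * (1 / lam i) + 1"
    unfolding mean_local_age_Suc[OF assms]
    using Suc arrival_rate[OF assms] by (intro add_right_mono mult_left_mono) auto
  also have "\<dots> = 1 / lam i"
    using arrival_rate[OF assms] by (simp add: field_simps)
  finally show ?case .
qed

lemma mean_local_age_le_mean_ap_age: "mean_local_age i t \<le> mean_ap_age i t"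
  unfolding mean_local_age_def mean_ap_age_def
  by (intro integral_mono) (auto simp: local_age_le_ap_age)

lemma expect_gain: "expect t (\<lambda>om. gain N lam p pol om t i) = mean_ap_age i t - mean_local_age i t"
  using expectation_mult_gain[where f = "\<lambda>_. 1" and t = t and i = i]
  by (simp add: mean_ap_age_def mean_local_age_def)

lemma mean_ap_age_Suc:
  assumes "i < N"
  shows "mean_ap_age i (Suc t) = mean_ap_age i t + 1 - p i * mean_served_gain i t"
proof -
  define g where "g om = of_bool (pol t (hist pol om t) = i) * (real (ap_age pol om i t) - real (local_age om i t))"
    for om
  have g_past: "g om = g om'" if "same_past t om om'" for om om'
    using that by (simp add: g_def hist_same_past ap_age_same_past local_age_same_past)
  have "mean_ap_age i (Suc t) = expect (Suc t) (\<lambda>om. real (ap_age pol om i t) + 1 - of_bool (success om t i) * g om)"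
    unfolding mean_ap_age_def by (intro Bochner_Integration.integral_cong) (auto simp: g_def Let_def)
  also have "\<dots> = expect (Suc t) (\<lambda>om. real (ap_age pol om i t)) + 1 - p i * expect (Suc t) g"
    using assms success_prob[OF assms]
    by (simp add: expectation_success_mult[where T = "Suc t"] g_past[OF same_past_upd_success])
  also have "expect (Suc t) (\<lambda>om. real (ap_age pol om i t)) = mean_ap_age i t"
    unfolding mean_ap_age_def
    by (rule expectation_sys_pmf_horizon[symmetric]) (auto dest: ap_age_same_past)
  also have "expect (Suc t) g = expect t g"
    by (rule expectation_sys_pmf_horizon[symmetric]) (auto dest: g_past)
  also have "\<dots> = mean_served_gain i t"
    unfolding mean_served_gain_def g_def
    by (rule expectation_mult_gain[where f = "\<lambda>h. of_bool (pol t h = i)", symmetric])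
  finally show ?thesis .
qed

end

lemma sum_mult_le_max:
  fixes a c :: "'i \<Rightarrow> real"
  assumes "finite I" "j \<in> I" "\<And>i. i \<in> I \<Longrightarrow> 0 \<le> c i" "sum c I \<le> 1"
    and "\<And>i. i \<in> I \<Longrightarrow> a i \<le> a j" "0 \<le> a j"
  shows "(\<Sum>i\<in>I. c i * a i) \<le> a j"
proof -
  have "(\<Sum>i\<in>I. c i * a i) \<le> (\<Sum>i\<in>I. c i * a j)"
    using assms by (intro sum_mono mult_left_mono) auto
  also have "\<dots> = sum c I * a j"
    by (simp add: sum_distrib_right)
  also have "\<dots> \<le> a j"
    using assms(3,4,6) by (simp add: mult_left_le_one_le sum_nonneg)
  finally show ?thesis .
qed

locale pomw_system = uplink_system +
  fixes w qs :: "nat \<Rightarrow> real"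
  assumes weight_pos: "i < N \<Longrightarrow> 0 < w i"
    and feasible: "lb_feasible N lam p qs"
    and pomw: "is_POMW N lam p (\<lambda>i. w i / (lam i * qs i)) pol"
begin

lemma qs_pos: "i < N \<Longrightarrow> 0 < qs i"
  using feasible by (simp add: lb_feasible_def)

lemma weighted_gain_le_served_gain:
  assumes om: "om \<in> set_pmf (sys_pmf N lam p t)"
  defines "G i \<equiv> gain N lam p pol om t i"
  shows "(\<Sum>i<N. w i / lam i * G i)
       \<le> (\<Sum>i<N. w i / (lam i * qs i) * p i * (of_bool (pol t (hist pol om t) = i) * G i))"
proof -
  define j where "j = pol t (hist pol om t)"
  define a where "a i = w i / (lam i * qs i) * p i * G i" for i
  have j: "j < N" and argmax: "\<And>i. i < N \<Longrightarrow> a i \<le> a j"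
    using pomw om unfolding is_POMW_def a_def G_def j_def Let_def by blast+
  have a_j: "0 \<le> a j"
    using j weight_pos arrival_rate success_prob qs_pos gain_nonneg[OF om]
    by (simp add: a_def G_def less_imp_le)
  have "w i / lam i * G i = qs i / p i * a i" if "i < N" for i
    using arrival_rate[OF that] success_prob[OF that] qs_pos[OF that] by (simp add: a_def)
  then have "(\<Sum>i<N. w i / lam i * G i) = (\<Sum>i<N. qs i / p i * a i)"
    by (intro sum.cong) auto
  also have "\<dots> \<le> a j"
    using j argmax a_j feasible success_prob qs_pos
    by (intro sum_mult_le_max) (auto simp: lb_feasible_def less_imp_le)
  also have "\<dots> = (\<Sum>i<N. if i = j then a i else 0)"
    using j by simp
  also have "\<dots> = (\<Sum>i<N. w i / (lam i * qs i) * p i * (of_bool (j = i) * G i))"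
    by (intro sum.cong) (auto simp: a_def)
  finally show ?thesis
    unfolding j_def .
qed

lemma weighted_mean_gap_le_served_gain:
  "(\<Sum>i<N. w i / lam i * (mean_ap_age i t - mean_local_age i t))
     \<le> (\<Sum>i<N. w i / (lam i * qs i) * p i * mean_served_gain i t)"
proof -
  have "(\<Sum>i<N. w i / lam i * (mean_ap_age i t - mean_local_age i t))
      = expect t (\<lambda>om. \<Sum>i<N. w i / lam i * gain N lam p pol om t i)"
    by (simp add: expect_gain)
  also have "\<dots> \<le> expect t (\<lambda>om. \<Sum>i<N. w i / (lam i * qs i) * p i
                   * (of_bool (pol t (hist pol om t) = i) * gain N lam p pol om t i))"
    by (intro integral_mono_AE AE_pmfI weighted_gain_le_served_gain) simp_all
  also have "\<dots> = (\<Sum>i<N. w i / (lam i * qs i) * p i * mean_served_gain i t)"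
    by (simp add: mean_served_gain_def)
  finally show ?thesis .
qed

definition lyapunov :: "nat \<Rightarrow> real" where
  "lyapunov t = (\<Sum>i<N. w i / (lam i * qs i) * (mean_ap_age i t - mean_local_age i t))"

lemma lyapunov_0: "lyapunov 0 = 0"
  by (simp add: lyapunov_def mean_ap_age_def mean_local_age_def)

lemma lyapunov_nonneg: "0 \<le> lyapunov t"
  unfolding lyapunov_def using weight_pos arrival_rate qs_pos mean_local_age_le_mean_ap_age
  by (intro sum_nonneg mult_nonneg_nonneg) (auto simp: less_imp_le)

lemma lyapunov_drift:
  "lyapunov (Suc t) - lyapunov t
     \<le> (\<Sum>i<N. w i / (qs i * lam i)) - (\<Sum>i<N. w i / lam i * (mean_ap_age i t - mean_local_age i t))"
proof -
  have "lyapunov (Suc t) - lyapunov t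
      = (\<Sum>i<N. w i / qs i * mean_local_age i t) - (\<Sum>i<N. w i / (lam i * qs i) * p i * mean_served_gain i t)"
    unfolding lyapunov_def sum_subtractf[symmetric]
  proof (intro sum.cong refl)
    fix i assume "i \<in> {..<N}"
    then have i: "i < N"
      by simp
    show "w i / (lam i * qs i) * (mean_ap_age i (Suc t) - mean_local_age i (Suc t))
        - w i / (lam i * qs i) * (mean_ap_age i t - mean_local_age i t)
      = w i / qs i * mean_local_age i t - w i / (lam i * qs i) * p i * mean_served_gain i t"
      using arrival_rate[OF i] qs_pos[OF i] by (simp add: mean_ap_age_Suc[OF i] mean_local_age_Suc[OF i] field_simps)
  qed
  also have "(\<Sum>i<N. w i / qs i * mean_local_age i t) \<le> (\<Sum>i<N. w i / (qs i * lam i))"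
  proof (rule sum_mono)
    fix i assume "i \<in> {..<N}"
    then have "w i / qs i * mean_local_age i t \<le> w i / qs i * (1 / lam i)"
      using weight_pos qs_pos mean_local_age_le by (intro mult_left_mono) (auto simp: less_imp_le)
    then show "w i / qs i * mean_local_age i t \<le> w i / (qs i * lam i)"
      by simp
  qed
  finally show ?thesis
    using weighted_mean_gap_le_served_gain[of t] by linarith
qed

lemma sum_weighted_mean_gap_le:
  "(\<Sum>t<T. \<Sum>i<N. w i / lam i * (mean_ap_age i t - mean_local_age i t))
     \<le> real T * (\<Sum>i<N. w i / (qs i * lam i))"
proof -
  have "lyapunov T - lyapunov 0 = (\<Sum>t<T. lyapunov (Suc t) - lyapunov t)"
    by (rule sum_lessThan_telescope[symmetric])
  also have "\<dots> \<le> (\<Sum>t<T. (\<Sum>i<N. w i / (qs i * lam i))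
                          - (\<Sum>i<N. w i / lam i * (mean_ap_age i t - mean_local_age i t)))"
    by (intro sum_mono lyapunov_drift)
  finally show ?thesis
    using lyapunov_0 lyapunov_nonneg[of T] by (simp add: sum_subtractf)
qed

lemma sum_weighted_mean_ap_age_le:
  "(\<Sum>t<T. \<Sum>i<N. w i * mean_ap_age i t) \<le> real T * (\<Sum>i<N. w i * (1 / qs i + 1) / lam i)"
proof -
  have "(\<Sum>i<N. w i * mean_ap_age i t)
      \<le> (\<Sum>i<N. w i / lam i * (mean_ap_age i t - mean_local_age i t) + w i / lam i)" for t
  proof (rule sum_mono)
    fix i assume i: "i \<in> {..<N}"
    have "w i * (mean_ap_age i t - mean_local_age i t) \<le> w i / lam i * (mean_ap_age i t - mean_local_age i t)"
      using i weight_pos arrival_rate mean_local_age_le_mean_ap_age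
      by (intro mult_right_mono) (auto simp: field_simps)
    moreover have "w i * mean_local_age i t \<le> w i * (1 / lam i)"
      using i weight_pos mean_local_age_le by (intro mult_left_mono) (auto simp: less_imp_le)
    ultimately show "w i * mean_ap_age i t
        \<le> w i / lam i * (mean_ap_age i t - mean_local_age i t) + w i / lam i"
      by (simp add: algebra_simps)
  qed
  then have "(\<Sum>t<T. \<Sum>i<N. w i * mean_ap_age i t)
      \<le> (\<Sum>t<T. \<Sum>i<N. w i / lam i * (mean_ap_age i t - mean_local_age i t)) + real T * (\<Sum>i<N. w i / lam i)"
    by (rule order_trans[OF sum_mono]) (simp_all add: sum.distrib)
  also have "\<dots> \<le> real T * (\<Sum>i<N. w i / (qs i * lam i)) + real T * (\<Sum>i<N. w i / lam i)"
    using sum_weighted_mean_gap_le by simp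
  also have "\<dots> = real T * (\<Sum>i<N. w i * (1 / qs i + 1) / lam i)"
    by (simp add: sum.distrib[symmetric] distrib_left[symmetric] add_divide_distrib field_simps)
  finally show ?thesis .
qed

lemma avg_wAoI_le:
  assumes "1 \<le> T"
  shows "avg_wAoI N w lam p pol T
       \<le> (1 + 1 / real T) * ((\<Sum>i<N. w i * (1 / qs i + 1) / lam i) / real N)"
proof -
  have horizon: "expect T (\<lambda>om. real (ap_age pol om i t)) = mean_ap_age i t" if "t \<le> T" for i t
    unfolding mean_ap_age_def
    by (rule expectation_sys_pmf_horizon[OF that, symmetric]) (auto dest: ap_age_same_past)
  have "expect T (\<lambda>om. \<Sum>t=1..T. \<Sum>i<N. w i * real (ap_age pol om i t))
      = (\<Sum>t=1..T. \<Sum>i<N. w i * mean_ap_age i t)"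
    by (simp add: horizon)
  also have "\<dots> \<le> (\<Sum>t<Suc T. \<Sum>i<N. w i * mean_ap_age i t)"
    using weight_pos
    by (intro sum_mono2 sum_nonneg mult_nonneg_nonneg) (auto simp: mean_ap_age_def less_imp_le)
  also have "\<dots> \<le> real (Suc T) * (\<Sum>i<N. w i * (1 / qs i + 1) / lam i)"
    by (rule sum_weighted_mean_ap_age_le)
  finally have "avg_wAoI N w lam p pol T
      \<le> real (Suc T) * (\<Sum>i<N. w i * (1 / qs i + 1) / lam i) / (real N * real T)"
    unfolding avg_wAoI_def by (intro divide_right_mono) auto
  also have "\<dots> = (1 + 1 / real T) * ((\<Sum>i<N. w i * (1 / qs i + 1) / lam i) / real N)"
    using assms by (simp add: field_simps)
  finally show ?thesis .
qed

lemma longterm_wAoI_le: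
  "longterm_wAoI N w lam p pol \<le> ereal ((\<Sum>i<N. w i * (1 / qs i + 1) / lam i) / real N)"
proof -
  define c where "c = (\<Sum>i<N. w i * (1 / qs i + 1) / lam i) / real N"
  have "eventually (\<lambda>T. ereal (avg_wAoI N w lam p pol T) \<le> ereal ((1 + 1 / real T) * c)) sequentially"
    using avg_wAoI_le by (intro eventually_sequentiallyI) (simp add: c_def)
  then have "longterm_wAoI N w lam p pol \<le> limsup (\<lambda>T. ereal ((1 + 1 / real T) * c))"
    unfolding longterm_wAoI_def by (rule Limsup_mono)
  also have "\<dots> = ereal c"
  proof (rule lim_imp_Limsup)
    have "(\<lambda>T. (1 + 1 / real T) * c) \<longlonglongrightarrow> (1 + 0) * c"
      by (intro tendsto_intros)
    then show "(\<lambda>T. ereal ((1 + 1 / real T) * c)) \<longlonglongrightarrow> ereal c"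
      by simp
  qed simp
  finally show ?thesis
    unfolding c_def .
qed

end

section \<open>Comparison with the lower bound\<close>

lemma lb_objective_pos:
  assumes "1 \<le> N" "\<And>i. i < N \<Longrightarrow> 0 < w i \<and> 0 < q i"
  shows "0 < lb_objective N w q"
  unfolding lb_objective_def using assms
  by (intro divide_pos_pos sum_pos mult_pos_pos add_pos_pos) (auto simp: lessThan_empty_iff)

lemma weighted_bound_lt_lb_objective:
  fixes w q lam :: "nat \<Rightarrow> real"
  assumes "1 \<le> N" "0 < lmin" "\<And>i. i < N \<Longrightarrow> 0 < w i \<and> 0 < q i \<and> lmin \<le> lam i"
  shows "(\<Sum>i<N. w i * (1 / q i + 1) / lam i) / real N < 2 / lmin * lb_objective N w q"
proof -
  have "(\<Sum>i<N. w i * (1 / q i + 1) / lam i) < (\<Sum>i<N. w i * (1 / q i + 3) / lmin)"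
  proof (rule sum_strict_mono)
    fix i assume "i \<in> {..<N}"
    then have i: "0 < w i" "0 < q i" "lmin \<le> lam i"
      using assms(3) by auto
    have "w i * (1 / q i + 1) / lam i \<le> w i * (1 / q i + 1) / lmin"
      using i assms(2) by (intro divide_left_mono) auto
    also have "\<dots> < w i * (1 / q i + 3) / lmin"
      using i assms(2) by (intro divide_strict_right_mono mult_strict_left_mono) auto
    finally show "w i * (1 / q i + 1) / lam i < w i * (1 / q i + 3) / lmin" .
  qed (use assms(1) in \<open>auto simp: lessThan_empty_iff\<close>)
  also have "\<dots> = real N * (2 / lmin * lb_objective N w q)"
    using assms(1) by (simp add: lb_objective_def sum_divide_distrib[symmetric])
  finally show ?thesis
    using assms(1) by (simp add: pos_divide_less_eq mult.commute)
qed

theorem corollary2: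
  fixes N :: nat and w lam p qs :: "nat \<Rightarrow> real" and pol :: policy
  assumes "N \<ge> 1"
    and "\<forall>i<N. 0 < w i"
    and "\<forall>i<N. 0 < lam i \<and> lam i \<le> 1"
    and "\<forall>i<N. 0 < p i \<and> p i \<le> 1"
    and "lb_optimal N w lam p qs"
    and "is_POMW N lam p (\<lambda>i. w i / (lam i * qs i)) pol"
  shows "longterm_wAoI N w lam p pol / ereal (lb_objective N w qs)
           < ereal (2 / Min (lam ` {..<N}))"
proof -
  interpret pomw_system N lam p pol w qs
    using assms by unfold_locales (auto simp: lb_optimal_def)
  define lmin where "lmin = Min (lam ` {..<N})"
  have lmin_le: "lmin \<le> lam i" if "i < N" for i
    unfolding lmin_def using that by (intro Min_le) auto
  have "lmin \<in> lam ` {..<N}"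
    unfolding lmin_def using assms(1) by (intro Min_in) (auto simp: lessThan_empty_iff)
  then have lmin_pos: "0 < lmin"
    using assms(3) by auto
  have L_pos: "0 < lb_objective N w qs"
    using assms(1,2) qs_pos by (intro lb_objective_pos) auto
  have "longterm_wAoI N w lam p pol / ereal (lb_objective N w qs)
      \<le> ereal ((\<Sum>i<N. w i * (1 / qs i + 1) / lam i) / real N) / ereal (lb_objective N w qs)"
    using longterm_wAoI_le L_pos by (intro ereal_divide_right_mono) auto
  also have "\<dots> = ereal ((\<Sum>i<N. w i * (1 / qs i + 1) / lam i) / real N / lb_objective N w qs)"
    using L_pos by simp
  also have "\<dots> < ereal (2 / lmin)"
    unfolding less_ereal.simps(1) pos_divide_less_eq[OF L_pos]
    using assms(2) qs_pos lmin_le by (intro weighted_bound_lt_lb_objective[OF assms(1) lmin_pos]) auto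
  finally show ?thesis
    unfolding lmin_def .
qed

end
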